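(* Let $L\ge2$, $d\ge1$, let $x_0,\dots,x_{L-1}\in\mathbb{R}^d$ be pairwise distinct with equal Euclidean norm, and let $n_0,n_1,\dots$ be i.i.d. $\mathcal{N}(0,I_{d\times d})$. For $\beta\neq0$ let $p_{i,\beta}^{(\ell)}=\frac{\exp(\beta\,n_i^Tx_\ell)}{\sum_{r=0}^{L-1}\exp(\beta\,n_i^Tx_r)}$. Then, almost surely, for every $\ell$, $\lim_{\beta\to0}\lim_{M\to\infty}\frac1M\sum_{i=0}^{M-1}p_{i,\beta}^{(\ell)}=\lim_{\beta\to0}\mathbb{E}[p_{i,\beta}^{(\ell)}]=\frac1L$, and $\lim_{\beta\to0}\lim_{M\to\infty}\frac{1}{M}\sum_{i=0}^{M-1}\frac{n_ip_{i,\beta}^{(\ell)}}{\beta}=\lim_{\beta\to0}\frac1\beta\mathbb{E}[n_ip_{i,\beta}^{(\ell)}]=\frac1L\left[\left(1-\frac1L\right)x_\ell-\frac1L\sum_{r\neq\ell}x_r\right]$. *)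

theory Defs
  imports "HOL-Probability.Probability"
begin

text \<open>Softmax weight p_{i,beta}^{(l)} for a realisation v = n_i(omega) of the noise vector,
  points x_0,...,x_{L-1} given by x :: nat => real^'d.\<close>
definition softmax_weight :: "nat \<Rightarrow> (nat \<Rightarrow> real ^ 'd) \<Rightarrow> real \<Rightarrow> real ^ 'd \<Rightarrow> nat \<Rightarrow> real" where
  "softmax_weight L x \<beta> v l =
     exp (\<beta> * (v \<bullet> x l)) / (\<Sum>r<L. exp (\<beta> * (v \<bullet> x r)))"

end

theory Submission
  imports Defs "HOL-Library.Discrete_Functions"
begin

text \<open>
  For fixed \<open>\<beta>\<close> the summands \<open>p\<^sub>i\<close> and \<open>p\<^sub>i n\<^sub>i / \<beta>\<close> are i.i.d. functions of \<open>n\<^sub>i\<close> with finite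
  second moments, so their averages converge almost surely to their expectations by the strong
  law of large numbers in Rajchman's form: Chebyshev's inequality and Borel--Cantelli
  give convergence along the squares \<open>m = k\<^sup>2\<close>, and the monotone partial sums of nonnegative
  summands fill the gaps. One null set serves all \<open>\<beta> \<noteq> 0\<close> at once: near any \<open>\<beta>\<close> the summands are
  Lipschitz in \<open>\<beta>\<close> with constant proportional to \<open>1 + |n\<^sub>i|\<^sup>2\<close>, whose averages stay bounded, so
  convergence at the countably many rational \<open>\<beta>\<close> propagates to every \<open>\<beta>\<close>.

  As \<open>\<beta> \<rightarrow> 0\<close>, \<open>(p\<^sub>\<beta> - 1/L) / \<beta>\<close> tends to \<open>(1/L) n \<bullet> c\<close> with \<open>c = x\<^sub>l - (1/L) \<Sum>\<^sub>r x\<^sub>r\<close> and is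
  bounded by a multiple of \<open>|n|\<close>; since \<open>E[n] = 0\<close> and \<open>E[(n \<bullet> c) n] = c\<close> for a standard Gaussian
  vector, dominated convergence gives the limits of the expectations.
\<close>

section \<open>Softmax weights\<close>

lemma softmax_denominator_pos: "0 < (L::nat) \<Longrightarrow> 0 < (\<Sum>r<L. exp (\<beta> * (v \<bullet> x r)))"
  by (intro sum_pos) auto

lemma softmax_weight_pos: "l < L \<Longrightarrow> 0 < softmax_weight L x \<beta> v l"
  unfolding softmax_weight_def by (simp add: softmax_denominator_pos)

lemma softmax_weight_le_1: "l < L \<Longrightarrow> softmax_weight L x \<beta> v l \<le> 1"
proof -
  assume "l < L"
  then have "exp (\<beta> * (v \<bullet> x l)) \<le> (\<Sum>r<L. exp (\<beta> * (v \<bullet> x r)))"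
    by (intro member_le_sum) auto
  then show ?thesis
    using softmax_denominator_pos[of L \<beta> v x] \<open>l < L\<close>
    unfolding softmax_weight_def by (simp add: divide_le_eq)
qed

lemma abs_softmax_weight_le_1: "l < L \<Longrightarrow> \<bar>softmax_weight L x \<beta> v l\<bar> \<le> 1"
  using softmax_weight_pos[of l L x \<beta> v] softmax_weight_le_1[of l L x \<beta> v] by simp

lemma sum_softmax_weight: "0 < L \<Longrightarrow> (\<Sum>l<L. softmax_weight L x \<beta> v l) = 1"
  unfolding softmax_weight_def
  using softmax_denominator_pos[of L \<beta> v x] by (simp add: sum_divide_distrib[symmetric])

lemma softmax_weight_0: "0 < L \<Longrightarrow> softmax_weight L x 0 v l = 1 / real L"
  unfolding softmax_weight_def by simp

lemma has_real_derivative_softmax_weight: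
  assumes "0 < L"
  shows "((\<lambda>\<beta>. softmax_weight L x \<beta> v l) has_real_derivative
    softmax_weight L x \<beta> v l * (v \<bullet> x l - (\<Sum>r<L. softmax_weight L x \<beta> v r * (v \<bullet> x r)))) (at \<beta>)"
proof -
  define S where "S = (\<Sum>r<L. exp (\<beta> * (v \<bullet> x r)))"
  have S: "S \<noteq> 0" unfolding S_def using softmax_denominator_pos[OF assms, of \<beta> v x] by simp
  have "((\<lambda>\<beta>. softmax_weight L x \<beta> v l) has_real_derivative
      (exp (\<beta> * (v \<bullet> x l)) * (v \<bullet> x l) * S - exp (\<beta> * (v \<bullet> x l)) * (\<Sum>r<L. exp (\<beta> * (v \<bullet> x r)) * (v \<bullet> x r))) / S\<^sup>2) (at \<beta>)"
    using S unfolding softmax_weight_def S_def by (auto intro!: derivative_eq_intros simp: power2_eq_square)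
  also have "(exp (\<beta> * (v \<bullet> x l)) * (v \<bullet> x l) * S - exp (\<beta> * (v \<bullet> x l)) * (\<Sum>r<L. exp (\<beta> * (v \<bullet> x r)) * (v \<bullet> x r))) / S\<^sup>2
      = softmax_weight L x \<beta> v l * (v \<bullet> x l - (\<Sum>r<L. softmax_weight L x \<beta> v r * (v \<bullet> x r)))"
    unfolding softmax_weight_def S_def[symmetric] using S
    by (simp add: sum_divide_distrib[symmetric] power2_eq_square field_simps)
  finally show ?thesis .
qed

lemma softmax_weight_lipschitz:
  assumes l: "l < L" and R: "\<And>r. r < L \<Longrightarrow> norm (x r) \<le> R"
  shows "\<bar>softmax_weight L x \<gamma> v l - softmax_weight L x \<beta> v l\<bar> \<le> 2 * R * norm v * \<bar>\<gamma> - \<beta>\<bar>"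
proof -
  have L: "0 < L" using l by simp
  have score: "\<bar>v \<bullet> x r\<bar> \<le> R * norm v" if "r < L" for r
    using Cauchy_Schwarz_ineq2[of v "x r"] mult_left_mono[OF R[OF that], of "norm v"]
    by (simp add: mult.commute)
  have derivative_bound:
    "\<bar>softmax_weight L x \<beta> v l * (v \<bullet> x l - (\<Sum>r<L. softmax_weight L x \<beta> v r * (v \<bullet> x r)))\<bar>
       \<le> 2 * R * norm v" for \<beta>
  proof -
    have "\<bar>\<Sum>r<L. softmax_weight L x \<beta> v r * (v \<bullet> x r)\<bar> \<le> (\<Sum>r<L. softmax_weight L x \<beta> v r * (R * norm v))"
      by (rule order.trans[OF sum_abs sum_mono])
         (auto simp: abs_mult less_imp_le[OF softmax_weight_pos] intro!: mult_left_mono score)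
    also have "\<dots> = R * norm v"
      by (simp add: sum_distrib_right[symmetric] sum_softmax_weight[OF L])
    finally have "\<bar>v \<bullet> x l - (\<Sum>r<L. softmax_weight L x \<beta> v r * (v \<bullet> x r))\<bar> \<le> 2 * R * norm v"
      using score[OF l] by linarith
    moreover have "softmax_weight L x \<beta> v l * \<bar>v \<bullet> x l - (\<Sum>r<L. softmax_weight L x \<beta> v r * (v \<bullet> x r))\<bar>
        \<le> \<bar>v \<bullet> x l - (\<Sum>r<L. softmax_weight L x \<beta> v r * (v \<bullet> x r))\<bar>"
      using softmax_weight_pos[OF l, of x \<beta> v] softmax_weight_le_1[OF l, of x \<beta> v]
      by (intro mult_left_le_one_le) auto
    ultimately show ?thesis
      using softmax_weight_pos[OF l, of x \<beta> v] by (simp add: abs_mult)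
  qed
  show ?thesis
    using field_differentiable_bound[of UNIV "\<lambda>\<beta>. softmax_weight L x \<beta> v l"
        "\<lambda>\<beta>. softmax_weight L x \<beta> v l * (v \<bullet> x l - (\<Sum>r<L. softmax_weight L x \<beta> v r * (v \<bullet> x r)))"
        "2 * R * norm v" \<gamma> \<beta>]
      has_real_derivative_softmax_weight[OF L] derivative_bound
    by auto
qed

lemma softmax_weight_difference_quotient_at_0:
  assumes l: "l < L"
  shows "((\<lambda>\<beta>. (softmax_weight L x \<beta> v l - 1 / real L) / \<beta>)
    \<longlongrightarrow> (1 / real L) * (v \<bullet> (x l - (1 / real L) *\<^sub>R (\<Sum>r<L. x r)))) (at 0)"
proof -
  have L: "0 < L" using l by simp
  have "softmax_weight L x 0 v l * (v \<bullet> x l - (\<Sum>r<L. softmax_weight L x 0 v r * (v \<bullet> x r)))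
      = (1 / real L) * (v \<bullet> (x l - (1 / real L) *\<^sub>R (\<Sum>r<L. x r)))"
    by (simp add: softmax_weight_0[OF L] inner_diff_right inner_sum_right sum_distrib_left)
  then have "((\<lambda>\<beta>. softmax_weight L x \<beta> v l) has_real_derivative
      (1 / real L) * (v \<bullet> (x l - (1 / real L) *\<^sub>R (\<Sum>r<L. x r)))) (at 0)"
    using has_real_derivative_softmax_weight[OF L, of x v l 0] by simp
  then show ?thesis
    by (simp add: has_field_derivative_iff softmax_weight_0[OF L])
qed

lemma le_1_plus_power2: "(t::real) \<le> 1 + t\<^sup>2"
  using sum_power2_ge_zero[of "t - 1/2" "0"] by (simp add: power2_eq_square algebra_simps)

lemma scaled_softmax_weight_lipschitz:
  assumes l: "l < L" and R: "\<And>r. r < L \<Longrightarrow> norm (x r) \<le> R"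
    and \<beta>: "\<beta> \<noteq> 0" and \<gamma>: "\<bar>\<gamma> - \<beta>\<bar> < \<bar>\<beta>\<bar> / 2"
  shows "norm ((softmax_weight L x \<gamma> v l / \<gamma>) *\<^sub>R v - (softmax_weight L x \<beta> v l / \<beta>) *\<^sub>R v)
    \<le> (2 * R / \<bar>\<beta>\<bar> + 2 / \<beta>\<^sup>2) * \<bar>\<gamma> - \<beta>\<bar> * (1 + (norm v)\<^sup>2)"
proof -
  define p where "p = softmax_weight L x \<beta> v l"
  define q where "q = softmax_weight L x \<gamma> v l"
  have R0: "0 \<le> R" using R[OF l] norm_ge_zero order_trans by blast
  have \<gamma>_large: "\<bar>\<beta>\<bar> / 2 \<le> \<bar>\<gamma>\<bar>" using \<gamma> by linarith
  then have \<gamma>0: "\<gamma> \<noteq> 0" using \<beta> by auto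
  have q: "0 \<le> q" "q \<le> 1"
    unfolding q_def using softmax_weight_pos[OF l] softmax_weight_le_1[OF l] by (auto intro: less_imp_le)
  have "q / \<gamma> - p / \<beta> = (q - p) / \<beta> + q * (\<beta> - \<gamma>) / (\<beta> * \<gamma>)"
    using \<beta> \<gamma>0 by (simp add: field_simps)
  then have "\<bar>q / \<gamma> - p / \<beta>\<bar> \<le> \<bar>q - p\<bar> / \<bar>\<beta>\<bar> + q * \<bar>\<gamma> - \<beta>\<bar> / (\<bar>\<beta>\<bar> * \<bar>\<gamma>\<bar>)"
    using q abs_triangle_ineq[of "(q - p) / \<beta>" "q * (\<beta> - \<gamma>) / (\<beta> * \<gamma>)"]
    by (simp add: abs_mult abs_div abs_minus_commute)
  also have "\<dots> \<le> 2 * R * norm v * \<bar>\<gamma> - \<beta>\<bar> / \<bar>\<beta>\<bar> + \<bar>\<gamma> - \<beta>\<bar> / (\<bar>\<beta>\<bar> * (\<bar>\<beta>\<bar> / 2))"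
  proof (intro add_mono divide_right_mono)
    show "\<bar>q - p\<bar> \<le> 2 * R * norm v * \<bar>\<gamma> - \<beta>\<bar>"
      unfolding p_def q_def by (rule softmax_weight_lipschitz[OF l R])
    have "q * \<bar>\<gamma> - \<beta>\<bar> / (\<bar>\<beta>\<bar> * \<bar>\<gamma>\<bar>) \<le> \<bar>\<gamma> - \<beta>\<bar> / (\<bar>\<beta>\<bar> * \<bar>\<gamma>\<bar>)"
      using q \<beta> \<gamma>0 by (intro divide_right_mono mult_left_le_one_le) auto
    also have "\<dots> \<le> \<bar>\<gamma> - \<beta>\<bar> / (\<bar>\<beta>\<bar> * (\<bar>\<beta>\<bar> / 2))"
      using \<beta> \<gamma>_large by (intro divide_left_mono mult_left_mono) (auto simp: zero_less_mult_iff)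
    finally show "q * \<bar>\<gamma> - \<beta>\<bar> / (\<bar>\<beta>\<bar> * \<bar>\<gamma>\<bar>) \<le> \<dots>" .
  qed simp
  finally have "\<bar>q / \<gamma> - p / \<beta>\<bar> \<le> \<bar>\<gamma> - \<beta>\<bar> * (2 * R / \<bar>\<beta>\<bar> * norm v + 2 / \<beta>\<^sup>2)"
    using \<beta> by (simp add: power2_eq_square field_simps)
  then have "norm ((q / \<gamma>) *\<^sub>R v - (p / \<beta>) *\<^sub>R v)
      \<le> \<bar>\<gamma> - \<beta>\<bar> * (2 * R / \<bar>\<beta>\<bar> * (norm v)\<^sup>2 + 2 / \<beta>\<^sup>2 * norm v)"
    unfolding scaleR_diff_left[symmetric] norm_scaleR
    by (auto simp: power2_eq_square algebra_simps dest: mult_right_mono[of _ _ "norm v"])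
  also have "\<dots> \<le> \<bar>\<gamma> - \<beta>\<bar> * (2 * R / \<bar>\<beta>\<bar> * (1 + (norm v)\<^sup>2) + 2 / \<beta>\<^sup>2 * (1 + (norm v)\<^sup>2))"
    using R0 le_1_plus_power2[of "norm v"]
    by (intro mult_left_mono add_mono) auto
  finally show ?thesis unfolding p_def q_def by (simp add: algebra_simps)
qed

section \<open>A strong law of large numbers\<close>

lemma filterlim_floor_sqrt: "filterlim floor_sqrt at_top sequentially"
  unfolding filterlim_at_top eventually_sequentially
  by (metis le_floor_sqrtI)

lemma LIMSEQ_of_mono_along_squares:
  fixes S :: "nat \<Rightarrow> real"
  assumes mono: "mono S" and nonneg: "\<And>m. 0 \<le> S m"
    and squares: "(\<lambda>k. S (k\<^sup>2) / real (k\<^sup>2)) \<longlonglongrightarrow> \<mu>"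
  shows "(\<lambda>m. S m / real m) \<longlonglongrightarrow> \<mu>"
proof (rule tendsto_sandwich)
  define upper where "upper k = S ((Suc k)\<^sup>2) / real ((Suc k)\<^sup>2) * (real (Suc k) / real k)\<^sup>2" for k
  define lower where "lower k = S (k\<^sup>2) / real (k\<^sup>2) * (real k / real (Suc k))\<^sup>2" for k
  have "lower \<longlonglongrightarrow> \<mu> * 1\<^sup>2"
    unfolding lower_def by (intro tendsto_intros squares LIMSEQ_n_over_Suc_n)
  then show "(\<lambda>m. lower (floor_sqrt m)) \<longlonglongrightarrow> \<mu>"
    by (intro filterlim_compose[OF _ filterlim_floor_sqrt]) simp
  have "upper \<longlonglongrightarrow> \<mu> * 1\<^sup>2"
    unfolding upper_def by (intro tendsto_intros LIMSEQ_Suc[OF squares] LIMSEQ_Suc_n_over_n)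
  then show "(\<lambda>m. upper (floor_sqrt m)) \<longlonglongrightarrow> \<mu>"
    by (intro filterlim_compose[OF _ filterlim_floor_sqrt]) simp
  have "lower k \<le> S m / real m \<and> S m / real m \<le> upper k"
    if m: "0 < m" and k: "k = floor_sqrt m" for m k
  proof -
    have "0 < k" using m k by simp
    have below: "k\<^sup>2 \<le> m" and above: "m < (Suc k)\<^sup>2"
      using k floor_sqrt_power2_le Suc_floor_sqrt_power2_gt by auto
    have "lower k = S (k\<^sup>2) / real ((Suc k)\<^sup>2)"
      using \<open>0 < k\<close> unfolding lower_def by (simp add: power_divide)
    also have "\<dots> \<le> S m / real m"
      using mono[THEN monoD, OF below] above m nonneg
      by (intro frac_le) (auto simp del: of_nat_power)
    finally have "lower k \<le> S m / real m" .
    moreover have "S m / real m \<le> S ((Suc k)\<^sup>2) / real (k\<^sup>2)"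
      using mono[THEN monoD, of m "(Suc k)\<^sup>2"] above below \<open>0 < k\<close> nonneg
      by (intro frac_le) (auto simp del: of_nat_power)
    moreover have "S ((Suc k)\<^sup>2) / real (k\<^sup>2) = upper k"
      using \<open>0 < k\<close> unfolding upper_def by (simp add: power_divide)
    ultimately show ?thesis by simp
  qed
  then show "\<forall>\<^sub>F m in sequentially. lower (floor_sqrt m) \<le> S m / real m"
    and "\<forall>\<^sub>F m in sequentially. S m / real m \<le> upper (floor_sqrt m)"
    by (auto simp: eventually_sequentially intro!: exI[of _ 1])
qed

lemma LIMSEQ_zero_of_eventually_less_inverse:
  fixes D :: "nat \<Rightarrow> real"
  assumes "\<And>k. 0 \<le> D k" and "\<And>j. eventually (\<lambda>k. D k < 1 / real (Suc j)) sequentially"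
  shows "D \<longlonglongrightarrow> 0"
proof (rule order_tendstoI)
  show "eventually (\<lambda>k. a < D k) sequentially" if "a < 0" for a
    using assms(1) that by (intro always_eventually allI) (meson less_le_trans)
  show "eventually (\<lambda>k. D k < \<epsilon>) sequentially" if \<epsilon>: "0 < \<epsilon>" for \<epsilon>
  proof -
    obtain j where j: "1 / real (Suc j) < \<epsilon>"
      using \<epsilon> by (rule nat_approx_posE)
    show ?thesis
      using assms(2)[of j] by (rule eventually_mono) (use j in linarith)
  qed
qed

lemma abs_mult_le_sum_squares: "\<bar>a * b\<bar> \<le> a\<^sup>2 + (b::real)\<^sup>2"
proof -
  have "2 * (\<bar>a\<bar> * \<bar>b\<bar>) \<le> a\<^sup>2 + b\<^sup>2"
    using sum_squares_bound[of "\<bar>a\<bar>" "\<bar>b\<bar>"] by simp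
  moreover have "0 \<le> \<bar>a\<bar> * \<bar>b\<bar>" by simp
  ultimately show ?thesis unfolding abs_mult by linarith
qed

context prob_space
begin

lemma integrable_mult_of_square_integrable:
  fixes f g :: "'a \<Rightarrow> real"
  assumes [measurable]: "f \<in> borel_measurable M" "g \<in> borel_measurable M"
    and "integrable M (\<lambda>\<omega>. (f \<omega>)\<^sup>2)" "integrable M (\<lambda>\<omega>. (g \<omega>)\<^sup>2)"
  shows "integrable M (\<lambda>\<omega>. f \<omega> * g \<omega>)"
  by (rule Bochner_Integration.integrable_bound[of _ "\<lambda>\<omega>. (f \<omega>)\<^sup>2 + (g \<omega>)\<^sup>2"])
     (use assms abs_mult_le_sum_squares in auto)

lemma integrable_of_square_norm_integrable:
  fixes f :: "'a \<Rightarrow> 'b::{banach, second_countable_topology}"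
  assumes [measurable]: "f \<in> borel_measurable M" and "integrable M (\<lambda>\<omega>. (norm (f \<omega>))\<^sup>2)"
  shows "integrable M f"
  using square_integrable_imp_integrable[of "\<lambda>\<omega>. norm (f \<omega>)"] assms
  by (simp add: integrable_norm_iff)

lemma variance_sum_le:
  fixes Y :: "nat \<Rightarrow> 'a \<Rightarrow> real"
  assumes [measurable]: "\<And>i. Y i \<in> borel_measurable M"
    and square_integrable: "\<And>i. integrable M (\<lambda>\<omega>. (Y i \<omega>)\<^sup>2)"
    and uncorrelated: "\<And>i k. i \<noteq> k \<Longrightarrow>
      expectation (\<lambda>\<omega>. Y i \<omega> * Y k \<omega>) = expectation (Y i) * expectation (Y k)"
    and variance_le: "\<And>i. variance (Y i) \<le> V"
  shows "variance (\<lambda>\<omega>. \<Sum>i<m. Y i \<omega>) \<le> real m * V"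
proof -
  have [simp]: "integrable M (Y i)" for i
    using square_integrable_imp_integrable[OF _ square_integrable] by simp
  have [simp]: "integrable M (\<lambda>\<omega>. Y i \<omega> * Y k \<omega>)" for i k
    by (rule integrable_mult_of_square_integrable[OF _ _ square_integrable square_integrable]) simp_all
  define W where "W i \<omega> = Y i \<omega> - expectation (Y i)" for i \<omega>
  have covariance: "expectation (\<lambda>\<omega>. W i \<omega> * W k \<omega>) = (if i = k then variance (Y i) else 0)" for i k
  proof (cases "i = k")
    case False
    have "(\<lambda>\<omega>. W i \<omega> * W k \<omega>) = (\<lambda>\<omega>. Y i \<omega> * Y k \<omega> - expectation (Y k) * Y i \<omega>
        - expectation (Y i) * Y k \<omega> + expectation (Y i) * expectation (Y k))"
      unfolding W_def by (auto simp: algebra_simps)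
    then show ?thesis using False by (simp add: uncorrelated prob_space)
  qed (simp add: W_def power2_eq_square)
  have "(\<lambda>\<omega>. ((\<Sum>i<m. Y i \<omega>) - expectation (\<lambda>\<omega>. \<Sum>i<m. Y i \<omega>))\<^sup>2)
      = (\<lambda>\<omega>. \<Sum>i<m. \<Sum>k<m. W i \<omega> * W k \<omega>)"
    unfolding W_def power2_eq_square by (simp add: sum_product[symmetric] sum_subtractf)
  then have "variance (\<lambda>\<omega>. \<Sum>i<m. Y i \<omega>) = (\<Sum>i<m. \<Sum>k<m. expectation (\<lambda>\<omega>. W i \<omega> * W k \<omega>))"
    by (simp add: W_def algebra_simps)
  also have "\<dots> = (\<Sum>i<m. variance (Y i))"
    by (simp add: covariance)
  also have "\<dots> \<le> real m * V"
    using sum_mono[of "{..<m}" "\<lambda>i. variance (Y i)" "\<lambda>_. V"] variance_le by simp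
  finally show ?thesis .
qed

lemma AE_tendsto_along_squares:
  fixes S :: "nat \<Rightarrow> 'a \<Rightarrow> real"
  assumes [measurable]: "\<And>m. S m \<in> borel_measurable M"
    and square_integrable: "\<And>m. integrable M (\<lambda>\<omega>. (S m \<omega>)\<^sup>2)"
    and variance_le: "\<And>m. variance (S m) \<le> real m * V"
  shows "AE \<omega> in M. (\<lambda>k. (S (k\<^sup>2) \<omega> - expectation (S (k\<^sup>2))) / real (k\<^sup>2)) \<longlonglongrightarrow> 0"
proof -
  define D where "D k \<omega> = \<bar>S ((Suc k)\<^sup>2) \<omega> - expectation (S ((Suc k)\<^sup>2))\<bar> / real ((Suc k)\<^sup>2)" for k \<omega>
  define A where "A j k = {\<omega> \<in> space M. 1 / real (Suc j) \<le> D k \<omega>}" for j k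
  have [measurable]: "A j k \<in> sets M" for j k
    unfolding A_def D_def by measurable
  have prob_A: "prob (A j k) \<le> V * (real (Suc j))\<^sup>2 * inverse (real ((Suc k)\<^sup>2))" for j k
  proof -
    have square_pos: "0 < real ((Suc k)\<^sup>2)" by simp
    have "A j k = {\<omega> \<in> space M. real ((Suc k)\<^sup>2) / real (Suc j) \<le> \<bar>S ((Suc k)\<^sup>2) \<omega> - expectation (S ((Suc k)\<^sup>2))\<bar>}"
      unfolding A_def D_def by (simp add: field_simps del: of_nat_Suc of_nat_power)
    also have "prob \<dots> \<le> variance (S ((Suc k)\<^sup>2)) / (real ((Suc k)\<^sup>2) / real (Suc j))\<^sup>2"
      by (rule Chebyshev_inequality) (simp_all add: square_integrable)
    also have "\<dots> \<le> real ((Suc k)\<^sup>2) * V / (real ((Suc k)\<^sup>2) / real (Suc j))\<^sup>2"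
      by (intro divide_right_mono variance_le) simp
    also have "\<dots> = V * (real (Suc j))\<^sup>2 * inverse (real ((Suc k)\<^sup>2))"
      using square_pos by (simp add: power2_eq_square field_simps del: of_nat_power of_nat_Suc)
    finally show ?thesis .
  qed
  have "summable (\<lambda>k. prob (A j k))" for j
  proof (rule summable_comparison_test')
    have "summable (\<lambda>k. inverse (real ((Suc k)\<^sup>2)))"
      using summable_Suc_iff[THEN iffD2, OF inverse_power_summable[of 2]] by simp
    then show "summable (\<lambda>k. V * (real (Suc j))\<^sup>2 * inverse (real ((Suc k)\<^sup>2)))"
      by (rule summable_mult)
  qed (use prob_A in simp)
  then have "AE \<omega> in M. \<forall>j. eventually (\<lambda>k. \<omega> \<in> space M - A j k) sequentially"
    unfolding AE_all_countable by (intro allI borel_cantelli_AE1) (auto simp: less_top[symmetric])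
  then show ?thesis
  proof (rule AE_mp, intro AE_I2 impI)
    fix \<omega> assume "\<omega> \<in> space M" and "\<forall>j. eventually (\<lambda>k. \<omega> \<in> space M - A j k) sequentially"
    then have "eventually (\<lambda>k. D k \<omega> < 1 / real (Suc j)) sequentially" for j
      unfolding A_def by (auto elim!: allE[of _ j] eventually_mono)
    then have "(\<lambda>k. D k \<omega>) \<longlonglongrightarrow> 0"
      by (rule LIMSEQ_zero_of_eventually_less_inverse[rotated]) (simp add: D_def)
    then have "(\<lambda>k. (S ((Suc k)\<^sup>2) \<omega> - expectation (S ((Suc k)\<^sup>2))) / real ((Suc k)\<^sup>2)) \<longlonglongrightarrow> 0"
      unfolding D_def by (subst tendsto_rabs_zero_iff[symmetric]) (simp add: abs_div)
    then show "(\<lambda>k. (S (k\<^sup>2) \<omega> - expectation (S (k\<^sup>2))) / real (k\<^sup>2)) \<longlonglongrightarrow> 0"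
      by (rule LIMSEQ_imp_Suc)
  qed
qed

lemma strong_law_nonneg_uncorrelated:
  fixes Y :: "nat \<Rightarrow> 'a \<Rightarrow> real"
  assumes [measurable]: "\<And>i. Y i \<in> borel_measurable M"
    and nonneg: "\<And>i \<omega>. 0 \<le> Y i \<omega>"
    and square_integrable: "\<And>i. integrable M (\<lambda>\<omega>. (Y i \<omega>)\<^sup>2)"
    and mean: "\<And>i. expectation (Y i) = \<mu>"
    and uncorrelated: "\<And>i k. i \<noteq> k \<Longrightarrow>
      expectation (\<lambda>\<omega>. Y i \<omega> * Y k \<omega>) = expectation (Y i) * expectation (Y k)"
    and variance_le: "\<And>i. variance (Y i) \<le> V"
  shows "AE \<omega> in M. (\<lambda>m. (\<Sum>i<m. Y i \<omega>) / real m) \<longlonglongrightarrow> \<mu>"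
proof -
  have [simp]: "integrable M (Y i)" for i
    using square_integrable_imp_integrable[OF _ square_integrable] by simp
  define S where "S m \<omega> = (\<Sum>i<m. Y i \<omega>)" for m \<omega>
  have [measurable]: "S m \<in> borel_measurable M" for m
    unfolding S_def by measurable
  have square_integrable_S: "integrable M (\<lambda>\<omega>. (S m \<omega>)\<^sup>2)" for m
    unfolding S_def power2_eq_square sum_product
    by (intro Bochner_Integration.integrable_sum integrable_mult_of_square_integrable square_integrable)
       simp_all
  have expectation_S: "expectation (S m) = real m * \<mu>" for m
    unfolding S_def by (simp add: mean)
  have "variance (S m) \<le> real m * V" for m
    unfolding S_def by (rule variance_sum_le) (use square_integrable uncorrelated variance_le in auto)
  then have "AE \<omega> in M. (\<lambda>k. (S (k\<^sup>2) \<omega> - expectation (S (k\<^sup>2))) / real (k\<^sup>2)) \<longlonglongrightarrow> 0"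
    by (intro AE_tendsto_along_squares square_integrable_S) auto
  then show ?thesis
  proof (rule AE_mp, intro AE_I2 impI)
    fix \<omega> assume "(\<lambda>k. (S (k\<^sup>2) \<omega> - expectation (S (k\<^sup>2))) / real (k\<^sup>2)) \<longlonglongrightarrow> 0"
    then have "(\<lambda>k. (S (k\<^sup>2) \<omega> - expectation (S (k\<^sup>2))) / real (k\<^sup>2) + \<mu>) \<longlonglongrightarrow> 0 + \<mu>"
      by (intro tendsto_add tendsto_const)
    moreover have "eventually (\<lambda>k. (S (k\<^sup>2) \<omega> - expectation (S (k\<^sup>2))) / real (k\<^sup>2) + \<mu>
        = S (k\<^sup>2) \<omega> / real (k\<^sup>2)) sequentially"
      by (auto simp: eventually_sequentially expectation_S field_simps intro!: exI[of _ 1])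
    ultimately have squares: "(\<lambda>k. S (k\<^sup>2) \<omega> / real (k\<^sup>2)) \<longlonglongrightarrow> \<mu>"
      by (simp add: Lim_transform_eventually)
    have "mono (\<lambda>m. S m \<omega>)"
      unfolding S_def by (intro monoI sum_mono2) (auto simp: nonneg)
    moreover have "0 \<le> S m \<omega>" for m
      unfolding S_def by (simp add: sum_nonneg nonneg)
    ultimately show "(\<lambda>m. (\<Sum>i<m. Y i \<omega>) / real m) \<longlonglongrightarrow> \<mu>"
      using LIMSEQ_of_mono_along_squares squares unfolding S_def by blast
  qed
qed

end

lemma LIMSEQ_by_rational_approximation:
  fixes a :: "nat \<Rightarrow> real \<Rightarrow> 'a::metric_space" and \<mu> :: "real \<Rightarrow> 'a"
  assumes "0 < \<delta>"
    and rational: "\<And>q. q \<in> \<rat> \<Longrightarrow> \<bar>q - \<beta>\<bar> < \<delta> \<Longrightarrow> (\<lambda>m. a m q) \<longlonglongrightarrow> \<mu> q"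
    and lipschitz_a: "eventually (\<lambda>m. \<forall>q. \<bar>q - \<beta>\<bar> < \<delta> \<longrightarrow> dist (a m q) (a m \<beta>) \<le> K * \<bar>q - \<beta>\<bar>) sequentially"
    and lipschitz_\<mu>: "\<And>q. \<bar>q - \<beta>\<bar> < \<delta> \<Longrightarrow> dist (\<mu> q) (\<mu> \<beta>) \<le> K * \<bar>q - \<beta>\<bar>"
  shows "(\<lambda>m. a m \<beta>) \<longlonglongrightarrow> \<mu> \<beta>"
proof (rule tendstoI)
  fix \<epsilon> :: real assume "0 < \<epsilon>"
  define \<eta> where "\<eta> = min \<delta> (\<epsilon> / (3 * (\<bar>K\<bar> + 1)))"
  have "0 < \<eta>" unfolding \<eta>_def using \<open>0 < \<delta>\<close> \<open>0 < \<epsilon>\<close> by simp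
  then obtain q where "q \<in> \<rat>" and "\<beta> - \<eta> < q" "q < \<beta> + \<eta>"
    using Rats_dense_in_real[of "\<beta> - \<eta>" "\<beta> + \<eta>"] by auto
  then have q: "\<bar>q - \<beta>\<bar> < \<delta>" "\<bar>q - \<beta>\<bar> < \<epsilon> / (3 * (\<bar>K\<bar> + 1))"
    unfolding \<eta>_def by auto
  have "K * \<bar>q - \<beta>\<bar> \<le> (\<bar>K\<bar> + 1) * \<bar>q - \<beta>\<bar>"
    by (intro mult_right_mono) auto
  also have "\<dots> \<le> \<epsilon> / 3"
    using q(2) by (simp add: field_simps add_pos_nonneg)
  finally have small: "K * \<bar>q - \<beta>\<bar> \<le> \<epsilon> / 3" .
  have "eventually (\<lambda>m. dist (a m q) (\<mu> q) < \<epsilon> / 3) sequentially"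
    using tendstoD[OF rational[OF \<open>q \<in> \<rat>\<close> q(1)], of "\<epsilon> / 3"] \<open>0 < \<epsilon>\<close> by simp
  then show "eventually (\<lambda>m. dist (a m \<beta>) (\<mu> \<beta>) < \<epsilon>) sequentially"
    using lipschitz_a
  proof eventually_elim
    case (elim m)
    have "dist (a m \<beta>) (\<mu> \<beta>) \<le> dist (a m q) (a m \<beta>) + dist (a m q) (\<mu> q) + dist (\<mu> q) (\<mu> \<beta>)"
      using dist_triangle[of "a m \<beta>" "\<mu> \<beta>" "a m q"] dist_triangle[of "a m q" "\<mu> \<beta>" "\<mu> q"]
      by (simp add: dist_commute)
    also have "\<dots> < \<epsilon>"
      using elim lipschitz_\<mu>[OF q(1)] q(1) small by fastforce
    finally show ?case .
  qed
qed

lemma eventually_lipschitz_average: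
  fixes g :: "real \<Rightarrow> nat \<Rightarrow> 'a::real_normed_vector"
  assumes lipschitz: "\<And>q i. \<bar>q - \<beta>\<bar> < \<delta> \<Longrightarrow> norm (g q i - g \<beta> i) \<le> C * \<bar>q - \<beta>\<bar> * w i"
    and "0 \<le> C" and bounded: "eventually (\<lambda>m. (\<Sum>i<m. w i) / real m \<le> H) sequentially"
  shows "eventually (\<lambda>m. \<forall>q. \<bar>q - \<beta>\<bar> < \<delta> \<longrightarrow>
    dist ((1 / real m) *\<^sub>R (\<Sum>i<m. g q i)) ((1 / real m) *\<^sub>R (\<Sum>i<m. g \<beta> i)) \<le> C * H * \<bar>q - \<beta>\<bar>)
    sequentially"
  using bounded
proof eventually_elim
  case (elim m)
  show ?case
  proof (intro allI impI)
    fix q assume "\<bar>q - \<beta>\<bar> < \<delta>"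
    then have "norm (\<Sum>i<m. g q i - g \<beta> i) \<le> (\<Sum>i<m. C * \<bar>q - \<beta>\<bar> * w i)"
      using norm_sum[of "\<lambda>i. g q i - g \<beta> i" "{..<m}"] lipschitz
        sum_mono[of "{..<m}" "\<lambda>i. norm (g q i - g \<beta> i)" "\<lambda>i. C * \<bar>q - \<beta>\<bar> * w i"]
      by simp
    then have "norm ((1 / real m) *\<^sub>R (\<Sum>i<m. g q i - g \<beta> i)) \<le> (\<Sum>i<m. C * \<bar>q - \<beta>\<bar> * w i) / real m"
      by (simp add: divide_right_mono)
    then have "dist ((1 / real m) *\<^sub>R (\<Sum>i<m. g q i)) ((1 / real m) *\<^sub>R (\<Sum>i<m. g \<beta> i))
        \<le> C * \<bar>q - \<beta>\<bar> * ((\<Sum>i<m. w i) / real m)"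
      by (simp add: dist_norm sum_subtractf scaleR_diff_right sum_distrib_left[symmetric])
    also have "\<dots> \<le> C * \<bar>q - \<beta>\<bar> * H"
      using elim \<open>0 \<le> C\<close> by (intro mult_left_mono) auto
    finally show "dist ((1 / real m) *\<^sub>R (\<Sum>i<m. g q i)) ((1 / real m) *\<^sub>R (\<Sum>i<m. g \<beta> i))
        \<le> C * H * \<bar>q - \<beta>\<bar>"
      by (simp add: ac_simps)
  qed
qed

lemma dist_integral_le:
  fixes f g :: "'a \<Rightarrow> 'b::{banach, second_countable_topology}"
  assumes "integrable M f" "integrable M g" "integrable M h"
    and "\<And>\<omega>. \<omega> \<in> space M \<Longrightarrow> norm (f \<omega> - g \<omega>) \<le> c * h \<omega>"
  shows "dist (integral\<^sup>L M f) (integral\<^sup>L M g) \<le> c * integral\<^sup>L M h"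
proof -
  have "dist (integral\<^sup>L M f) (integral\<^sup>L M g) = norm (\<integral>\<omega>. f \<omega> - g \<omega> \<partial>M)"
    using assms by (simp add: dist_norm)
  also have "\<dots> \<le> (\<integral>\<omega>. norm (f \<omega> - g \<omega>) \<partial>M)"
    by (rule integral_norm_bound)
  also have "\<dots> \<le> (\<integral>\<omega>. c * h \<omega> \<partial>M)"
    using assms by (intro integral_mono) auto
  finally show ?thesis by simp
qed

locale iid_sequence = prob_space M for M :: "'w measure" +
  fixes N :: "'v measure" and X :: "nat \<Rightarrow> 'w \<Rightarrow> 'v"
  assumes measurable_X[measurable]: "\<And>i. X i \<in> M \<rightarrow>\<^sub>M N"
    and indep_X: "indep_vars (\<lambda>_. N) X UNIV"
    and distr_X: "\<And>i. distr M N (X i) = distr M N (X 0)"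
begin

lemma
  fixes f :: "'v \<Rightarrow> 'b::{banach, second_countable_topology}"
  assumes [measurable]: "f \<in> borel_measurable N"
  shows integral_X_eq: "expectation (\<lambda>\<omega>. f (X i \<omega>)) = expectation (\<lambda>\<omega>. f (X 0 \<omega>))"
    and integrable_X_iff: "integrable M (\<lambda>\<omega>. f (X i \<omega>)) \<longleftrightarrow> integrable M (\<lambda>\<omega>. f (X 0 \<omega>))"
  using integral_distr[of "X i" M N f] integral_distr[of "X 0" M N f]
    integrable_distr_eq[of "X i" M N f] integrable_distr_eq[of "X 0" M N f]
  by (simp_all add: distr_X[of i])

lemma expectation_mult_X:
  fixes f g :: "'v \<Rightarrow> real"
  assumes [measurable]: "f \<in> borel_measurable N" "g \<in> borel_measurable N"
    and "i \<noteq> k" "integrable M (\<lambda>\<omega>. f (X i \<omega>))" "integrable M (\<lambda>\<omega>. g (X k \<omega>))"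
  shows "expectation (\<lambda>\<omega>. f (X i \<omega>) * g (X k \<omega>))
    = expectation (\<lambda>\<omega>. f (X i \<omega>)) * expectation (\<lambda>\<omega>. g (X k \<omega>))"
proof -
  have "indep_vars (\<lambda>_. N) X {i, k}"
    using indep_vars_subset[OF indep_X] by simp
  then have "indep_vars (\<lambda>_. borel) (\<lambda>t \<omega>. (if t = i then f else g) (X t \<omega>)) {i, k}"
    by (rule indep_vars_compose2) simp
  then have "expectation (\<lambda>\<omega>. \<Prod>t\<in>{i, k}. (if t = i then f else g) (X t \<omega>))
      = (\<Prod>t\<in>{i, k}. expectation (\<lambda>\<omega>. (if t = i then f else g) (X t \<omega>)))"
    by (rule indep_vars_lebesgue_integral[rotated]) (use assms in auto)
  then show ?thesis using \<open>i \<noteq> k\<close> by simp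
qed

lemma strong_law_nonneg:
  fixes f :: "'v \<Rightarrow> real"
  assumes [measurable]: "f \<in> borel_measurable N"
    and nonneg: "\<And>v. 0 \<le> f v" and square_integrable: "integrable M (\<lambda>\<omega>. (f (X 0 \<omega>))\<^sup>2)"
  shows "AE \<omega> in M. (\<lambda>m. (\<Sum>i<m. f (X i \<omega>)) / real m) \<longlonglongrightarrow> expectation (\<lambda>\<omega>. f (X 0 \<omega>))"
proof (rule strong_law_nonneg_uncorrelated)
  show square_integrable_i: "integrable M (\<lambda>\<omega>. (f (X i \<omega>))\<^sup>2)" for i
    using square_integrable integrable_X_iff[of "\<lambda>v. (f v)\<^sup>2" i] by simp
  have integrable_i: "integrable M (\<lambda>\<omega>. f (X i \<omega>))" for i
    by (rule square_integrable_imp_integrable[OF _ square_integrable_i]) simp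
  show "expectation (\<lambda>\<omega>. f (X i \<omega>)) = expectation (\<lambda>\<omega>. f (X 0 \<omega>))" for i
    by (rule integral_X_eq) simp
  show "expectation (\<lambda>\<omega>. f (X i \<omega>) * f (X k \<omega>))
      = expectation (\<lambda>\<omega>. f (X i \<omega>)) * expectation (\<lambda>\<omega>. f (X k \<omega>))" if "i \<noteq> k" for i k
    by (rule expectation_mult_X[OF _ _ that integrable_i integrable_i]) simp_all
  show "variance (\<lambda>\<omega>. f (X i \<omega>)) \<le> variance (\<lambda>\<omega>. f (X 0 \<omega>))" for i
    using integral_X_eq[of f i] integral_X_eq[of "\<lambda>v. (f v - expectation (\<lambda>\<omega>. f (X 0 \<omega>)))\<^sup>2" i]
    by simp
qed (simp_all add: nonneg)

lemma strong_law_real: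
  fixes f :: "'v \<Rightarrow> real"
  assumes [measurable]: "f \<in> borel_measurable N"
    and square_integrable: "integrable M (\<lambda>\<omega>. (f (X 0 \<omega>))\<^sup>2)"
  shows "AE \<omega> in M. (\<lambda>m. (\<Sum>i<m. f (X i \<omega>)) / real m) \<longlonglongrightarrow> expectation (\<lambda>\<omega>. f (X 0 \<omega>))"
proof -
  define f_pos where "f_pos v = max 0 (f v)" for v
  define f_neg where "f_neg v = max 0 (- f v)" for v
  have [measurable]: "f_pos \<in> borel_measurable N" "f_neg \<in> borel_measurable N"
    unfolding f_pos_def f_neg_def by measurable
  have "integrable M (\<lambda>\<omega>. (f_pos (X 0 \<omega>))\<^sup>2)" "integrable M (\<lambda>\<omega>. (f_neg (X 0 \<omega>))\<^sup>2)"
    by (intro Bochner_Integration.integrable_bound[OF square_integrable] AE_I2;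
        simp add: f_pos_def f_neg_def max_def power2_eq_square)+
  then have "AE \<omega> in M. (\<lambda>m. (\<Sum>i<m. f_pos (X i \<omega>)) / real m) \<longlonglongrightarrow> expectation (\<lambda>\<omega>. f_pos (X 0 \<omega>))"
      and "AE \<omega> in M. (\<lambda>m. (\<Sum>i<m. f_neg (X i \<omega>)) / real m) \<longlonglongrightarrow> expectation (\<lambda>\<omega>. f_neg (X 0 \<omega>))"
    by (auto intro!: strong_law_nonneg simp: f_pos_def f_neg_def)
  then show ?thesis
  proof eventually_elim
    case (elim \<omega>)
    have "integrable M (\<lambda>\<omega>. f_pos (X 0 \<omega>))" "integrable M (\<lambda>\<omega>. f_neg (X 0 \<omega>))"
      using \<open>integrable M (\<lambda>\<omega>. (f_pos (X 0 \<omega>))\<^sup>2)\<close> \<open>integrable M (\<lambda>\<omega>. (f_neg (X 0 \<omega>))\<^sup>2)\<close>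
      by (auto intro: square_integrable_imp_integrable)
    moreover have f: "f v = f_pos v - f_neg v" for v
      by (simp add: f_pos_def f_neg_def max_def)
    ultimately show ?case
      using tendsto_diff[OF elim] by (simp add: sum_subtractf diff_divide_distrib)
  qed
qed

lemma strong_law:
  fixes f :: "'v \<Rightarrow> 'b::euclidean_space"
  assumes [measurable]: "f \<in> borel_measurable N"
    and square_integrable: "integrable M (\<lambda>\<omega>. (norm (f (X 0 \<omega>)))\<^sup>2)"
  shows "AE \<omega> in M. (\<lambda>m. (1 / real m) *\<^sub>R (\<Sum>i<m. f (X i \<omega>))) \<longlonglongrightarrow> expectation (\<lambda>\<omega>. f (X 0 \<omega>))"
proof -
  have integrable: "integrable M (\<lambda>\<omega>. f (X 0 \<omega>))"
    by (rule integrable_of_square_norm_integrable[OF _ square_integrable]) simp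
  have "AE \<omega> in M. \<forall>b\<in>Basis.
      (\<lambda>m. (\<Sum>i<m. f (X i \<omega>) \<bullet> b) / real m) \<longlonglongrightarrow> expectation (\<lambda>\<omega>. f (X 0 \<omega>) \<bullet> b)"
  proof (rule AE_ball_countable')
    fix b :: 'b assume "b \<in> Basis"
    then have "(f v \<bullet> b)\<^sup>2 \<le> (norm (f v))\<^sup>2" for v
      using Basis_le_norm[of b "f v"] by (metis abs_ge_zero power2_abs power_mono)
    then have "integrable M (\<lambda>\<omega>. (f (X 0 \<omega>) \<bullet> b)\<^sup>2)"
      by (intro Bochner_Integration.integrable_bound[OF square_integrable] AE_I2) simp_all
    then show "AE \<omega> in M. (\<lambda>m. (\<Sum>i<m. f (X i \<omega>) \<bullet> b) / real m)
        \<longlonglongrightarrow> expectation (\<lambda>\<omega>. f (X 0 \<omega>) \<bullet> b)"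
      by (intro strong_law_real) simp_all
  qed (simp add: countable_finite)
  then show ?thesis
  proof eventually_elim
    case (elim \<omega>)
    show ?case
      unfolding tendsto_componentwise_iff[of _ "expectation (\<lambda>\<omega>. f (X 0 \<omega>))"]
      using elim integrable by (simp add: inner_sum_left)
  qed
qed

lemma AE_strong_law_uniform:
  fixes f :: "real \<Rightarrow> 'v \<Rightarrow> 'b::euclidean_space" and h :: "'v \<Rightarrow> real"
  assumes [measurable]: "\<And>\<beta>. f \<beta> \<in> borel_measurable N" "h \<in> borel_measurable N"
    and square_integrable_f: "\<And>\<beta>. integrable M (\<lambda>\<omega>. (norm (f \<beta> (X 0 \<omega>)))\<^sup>2)"
    and square_integrable_h: "integrable M (\<lambda>\<omega>. (h (X 0 \<omega>))\<^sup>2)"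
    and radius: "\<And>\<beta>. \<beta> \<in> U \<Longrightarrow> 0 < \<delta> \<beta>" and constant_nonneg: "\<And>\<beta>. \<beta> \<in> U \<Longrightarrow> 0 \<le> C \<beta>"
    and lipschitz: "\<And>\<beta> \<gamma> v. \<beta> \<in> U \<Longrightarrow> \<bar>\<gamma> - \<beta>\<bar> < \<delta> \<beta> \<Longrightarrow>
      norm (f \<gamma> v - f \<beta> v) \<le> C \<beta> * \<bar>\<gamma> - \<beta>\<bar> * h v"
  shows "AE \<omega> in M. \<forall>\<beta>\<in>U.
    (\<lambda>m. (1 / real m) *\<^sub>R (\<Sum>i<m. f \<beta> (X i \<omega>))) \<longlonglongrightarrow> expectation (\<lambda>\<omega>. f \<beta> (X 0 \<omega>))"
proof -
  have integrable_f: "integrable M (\<lambda>\<omega>. f \<beta> (X 0 \<omega>))" for \<beta>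
    by (rule integrable_of_square_norm_integrable[OF _ square_integrable_f]) simp
  have integrable_h: "integrable M (\<lambda>\<omega>. h (X 0 \<omega>))"
    by (rule square_integrable_imp_integrable[OF _ square_integrable_h]) simp
  define H where "H = \<bar>expectation (\<lambda>\<omega>. h (X 0 \<omega>))\<bar> + 1"
  have "AE \<omega> in M. \<forall>q\<in>\<rat>.
      (\<lambda>m. (1 / real m) *\<^sub>R (\<Sum>i<m. f q (X i \<omega>))) \<longlonglongrightarrow> expectation (\<lambda>\<omega>. f q (X 0 \<omega>))"
    by (intro AE_ball_countable' strong_law square_integrable_f countable_rat) simp
  moreover have "AE \<omega> in M. (\<lambda>m. (\<Sum>i<m. h (X i \<omega>)) / real m) \<longlonglongrightarrow> expectation (\<lambda>\<omega>. h (X 0 \<omega>))"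
    by (intro strong_law_real square_integrable_h) simp
  ultimately show ?thesis
  proof eventually_elim
    case (elim \<omega>)
    show ?case
    proof
      fix \<beta> assume "\<beta> \<in> U"
      have "0 < \<delta> \<beta>" "0 \<le> C \<beta>"
        and lip: "\<And>\<gamma> v. \<bar>\<gamma> - \<beta>\<bar> < \<delta> \<beta> \<Longrightarrow> norm (f \<gamma> v - f \<beta> v) \<le> C \<beta> * \<bar>\<gamma> - \<beta>\<bar> * h v"
        using radius constant_nonneg lipschitz \<open>\<beta> \<in> U\<close> by auto
      have "expectation (\<lambda>\<omega>. h (X 0 \<omega>)) < H"
        unfolding H_def by simp
      from order_tendstoD(2)[OF elim(2) this]
      have "eventually (\<lambda>m. (\<Sum>i<m. h (X i \<omega>)) / real m \<le> H) sequentially"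
        by (rule eventually_mono) simp
      then have lipschitz_average: "eventually (\<lambda>m. \<forall>q. \<bar>q - \<beta>\<bar> < \<delta> \<beta> \<longrightarrow>
          dist ((1 / real m) *\<^sub>R (\<Sum>i<m. f q (X i \<omega>))) ((1 / real m) *\<^sub>R (\<Sum>i<m. f \<beta> (X i \<omega>)))
            \<le> C \<beta> * H * \<bar>q - \<beta>\<bar>) sequentially"
        using eventually_lipschitz_average[where g="\<lambda>q i. f q (X i \<omega>)" and w="\<lambda>i. h (X i \<omega>)"]
          lip \<open>0 \<le> C \<beta>\<close> by blast
      have lipschitz_expectation: "dist (expectation (\<lambda>\<omega>. f q (X 0 \<omega>))) (expectation (\<lambda>\<omega>. f \<beta> (X 0 \<omega>)))
          \<le> C \<beta> * H * \<bar>q - \<beta>\<bar>" if "\<bar>q - \<beta>\<bar> < \<delta> \<beta>" for q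
      proof -
        have "dist (expectation (\<lambda>\<omega>. f q (X 0 \<omega>))) (expectation (\<lambda>\<omega>. f \<beta> (X 0 \<omega>)))
            \<le> C \<beta> * \<bar>q - \<beta>\<bar> * expectation (\<lambda>\<omega>. h (X 0 \<omega>))"
          using lip[OF that] by (intro dist_integral_le integrable_f integrable_h) (simp add: mult.assoc)
        also have "\<dots> \<le> C \<beta> * \<bar>q - \<beta>\<bar> * H"
          using \<open>0 \<le> C \<beta>\<close> unfolding H_def by (intro mult_left_mono) auto
        finally show ?thesis by (simp add: ac_simps)
      qed
      show "(\<lambda>m. (1 / real m) *\<^sub>R (\<Sum>i<m. f \<beta> (X i \<omega>)))
          \<longlonglongrightarrow> expectation (\<lambda>\<omega>. f \<beta> (X 0 \<omega>))"
        by (rule LIMSEQ_by_rational_approximation[where a="\<lambda>m q. (1 / real m) *\<^sub>R (\<Sum>i<m. f q (X i \<omega>))"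
              and \<mu>="\<lambda>q. expectation (\<lambda>\<omega>. f q (X 0 \<omega>))", OF \<open>0 < \<delta> \<beta>\<close> _ lipschitz_average lipschitz_expectation])
           (use elim(1) in blast)+
    qed
  qed
qed

end

section \<open>Sequences of standard Gaussian vectors\<close>

lemma borel_measurable_vec_lambda[measurable_dest]:
  "(\<And>j. (\<lambda>\<omega>. f \<omega> j) \<in> borel_measurable N) \<Longrightarrow> (\<lambda>\<omega>. (\<chi> j. f \<omega> j) :: real ^ 'd) \<in> borel_measurable N"
  by (subst borel_measurable_euclidean_space) (auto simp: Basis_vec_def cart_eq_inner_axis[symmetric])

lemma borel_measurable_softmax_weight[measurable]:
  "(\<lambda>v. softmax_weight L x \<beta> v l) \<in> borel_measurable borel"
  unfolding softmax_weight_def by measurable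

lemma norm_power2_cart: "(norm (v :: real ^ 'd))\<^sup>2 = (\<Sum>j\<in>UNIV. (v $ j)\<^sup>2)"
  unfolding power2_norm_eq_inner inner_vec_def by (simp add: power2_eq_square)

lemma integral_cart_component:
  fixes f :: "'a \<Rightarrow> real ^ 'd"
  assumes "integrable M f"
  shows "integral\<^sup>L M f $ j = (\<integral>\<omega>. f \<omega> $ j \<partial>M)"
  using assms by (simp add: cart_eq_inner_axis)

locale std_normal_sequence = prob_space M for M :: "'w measure" +
  fixes n :: "nat \<Rightarrow> 'w \<Rightarrow> real ^ 'd"
  assumes measurable_n[measurable]: "\<And>i. n i \<in> borel_measurable M"
    and indep_coordinates: "indep_vars (\<lambda>_. borel) (\<lambda>(i, j). \<lambda>\<omega>. n i \<omega> $ j) (UNIV :: (nat \<times> 'd) set)"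
    and std_normal_coordinates:
      "\<And>i j. distributed M lborel (\<lambda>\<omega>. n i \<omega> $ j) (\<lambda>t. ennreal (std_normal_density t))"
begin

lemma measurable_coordinate[measurable]: "(\<lambda>\<omega>. n i \<omega> $ j) \<in> borel_measurable M"
  by (rule measurable_compose[OF measurable_n borel_measurable_nth])

lemma indep_vectors: "indep_vars (\<lambda>_. borel) n UNIV"
proof -
  have "indep_vars (\<lambda>i. PiM ({i} \<times> UNIV) (\<lambda>_. borel))
      (\<lambda>i \<omega>. restrict (\<lambda>k. (\<lambda>(i, j). \<lambda>\<omega>. n i \<omega> $ j) k \<omega>) ({i} \<times> UNIV)) (UNIV :: nat set)"
    by (rule indep_vars_restrict[OF indep_coordinates]) (auto simp: disjoint_family_on_def)
  then have "indep_vars (\<lambda>_. borel) (\<lambda>i \<omega>. (\<lambda>F. (\<chi> j. F (i, j)) :: real ^ 'd)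
      (restrict (\<lambda>k. (\<lambda>(i, j). \<lambda>\<omega>. n i \<omega> $ j) k \<omega>) ({i} \<times> UNIV))) (UNIV :: nat set)"
    by (rule indep_vars_compose2) (intro borel_measurable_vec_lambda measurable_component_singleton; simp)
  then show ?thesis
    by (rule indep_vars_cong[THEN iffD1, rotated -1]) (auto simp: vec_eq_iff)
qed

lemma indep_coordinates_of_vector: "indep_vars (\<lambda>_. borel) (\<lambda>j \<omega>. n i \<omega> $ j) (UNIV :: 'd set)"
proof -
  have "indep_vars (\<lambda>j. PiM {(i, j)} (\<lambda>_. borel))
      (\<lambda>j \<omega>. restrict (\<lambda>k. (\<lambda>(i, j). \<lambda>\<omega>. n i \<omega> $ j) k \<omega>) {(i, j)}) (UNIV :: 'd set)"
    by (rule indep_vars_restrict[OF indep_coordinates]) (auto simp: disjoint_family_on_def)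
  then have "indep_vars (\<lambda>_. borel)
      (\<lambda>j \<omega>. (\<lambda>F. F (i, j)) (restrict (\<lambda>k. (\<lambda>(i, j). \<lambda>\<omega>. n i \<omega> $ j) k \<omega>) {(i, j)})) (UNIV :: 'd set)"
    by (rule indep_vars_compose2) (rule measurable_component_singleton, simp)
  then show ?thesis
    by (rule indep_vars_cong[THEN iffD1, rotated -1]) auto
qed

lemma distr_vector:
  "distr M borel (n i) = distr (PiM UNIV (\<lambda>_::'d. density lborel (\<lambda>t. ennreal (std_normal_density t)))) borel
     (\<lambda>F. \<chi> j. F j)"
proof -
  have distr_coordinate: "distr M borel (\<lambda>\<omega>. n i \<omega> $ j) = density lborel (\<lambda>t. ennreal (std_normal_density t))" for j
  proof -
    have "distr M borel (\<lambda>\<omega>. n i \<omega> $ j) = distr M lborel (\<lambda>\<omega>. n i \<omega> $ j)"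
      by (rule distr_cong) auto
    then show ?thesis
      using distributed_distr_eq_density[OF std_normal_coordinates[of i j]] by simp
  qed
  have "distr M (PiM UNIV (\<lambda>_. borel)) (\<lambda>\<omega>. \<lambda>j\<in>UNIV. n i \<omega> $ j)
      = PiM UNIV (\<lambda>j. distr M borel (\<lambda>\<omega>. n i \<omega> $ j))"
    using indep_vars_iff_distr_eq_PiM[where I=UNIV and M'="\<lambda>_. borel" and X="\<lambda>j \<omega>. n i \<omega> $ j"]
      indep_coordinates_of_vector measurable_coordinate
    by simp
  also have "\<dots> = PiM UNIV (\<lambda>_::'d. density lborel (\<lambda>t. ennreal (std_normal_density t)))"
    by (simp add: distr_coordinate)
  finally have product: "distr M (PiM UNIV (\<lambda>_. borel)) (\<lambda>\<omega>. \<lambda>j\<in>UNIV. n i \<omega> $ j)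
      = PiM UNIV (\<lambda>_::'d. density lborel (\<lambda>t. ennreal (std_normal_density t)))" .
  have vector_of_coordinates: "(\<lambda>F. (\<chi> j. F j) :: real ^ 'd) \<in> PiM UNIV (\<lambda>_. borel) \<rightarrow>\<^sub>M borel"
    by (intro borel_measurable_vec_lambda measurable_component_singleton) simp
  have "distr M borel (n i) = distr M borel ((\<lambda>F. \<chi> j. F j) \<circ> (\<lambda>\<omega>. \<lambda>j\<in>UNIV. n i \<omega> $ j))"
    by (rule distr_cong) (auto simp: vec_eq_iff)
  also have "\<dots> = distr (distr M (PiM UNIV (\<lambda>_. borel)) (\<lambda>\<omega>. \<lambda>j\<in>UNIV. n i \<omega> $ j)) borel (\<lambda>F. \<chi> j. F j)"
    by (rule distr_distr[symmetric, OF vector_of_coordinates]) measurable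
  finally show ?thesis unfolding product .
qed

sublocale iid_sequence M borel n
  using indep_vectors distr_vector by unfold_locales simp_all

lemma
  shows integrable_coordinate_power: "integrable M (\<lambda>\<omega>. (n i \<omega> $ j) ^ k)"
    and expectation_coordinate: "expectation (\<lambda>\<omega>. n i \<omega> $ j) = 0"
    and expectation_coordinate_power2: "expectation (\<lambda>\<omega>. (n i \<omega> $ j)\<^sup>2) = 1"
  using distributed_integrable[OF std_normal_coordinates[of i j], of "\<lambda>t. t ^ k"]
    distributed_integral[OF std_normal_coordinates[of i j], of "\<lambda>t. t"]
    distributed_integral[OF std_normal_coordinates[of i j], of "\<lambda>t. t\<^sup>2"]
    integrable_std_normal_moment[of k] integral_std_normal_moment_odd[of 0]
    integral_std_normal_moment_even[of 1]
  by simp_all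

lemma expectation_coordinate_mult:
  "expectation (\<lambda>\<omega>. n i \<omega> $ j * n i \<omega> $ k) = (if j = k then 1 else 0)"
proof (cases "j = k")
  case False
  have "indep_vars (\<lambda>_. borel) (\<lambda>j \<omega>. n i \<omega> $ j) {j, k}"
    using indep_vars_subset[OF indep_coordinates_of_vector] by simp
  then have "expectation (\<lambda>\<omega>. \<Prod>t\<in>{j, k}. n i \<omega> $ t) = (\<Prod>t\<in>{j, k}. expectation (\<lambda>\<omega>. n i \<omega> $ t))"
    by (rule indep_vars_lebesgue_integral[rotated])
       (use integrable_coordinate_power[where k=1] in auto)
  then show ?thesis using False by (simp add: expectation_coordinate)
qed (simp add: expectation_coordinate_power2[unfolded power2_eq_square])

lemma integrable_coordinate_mult: "integrable M (\<lambda>\<omega>. n i \<omega> $ j * n i \<omega> $ k)"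
  by (rule integrable_mult_of_square_integrable[OF _ _ integrable_coordinate_power integrable_coordinate_power];
      measurable)

lemma integrable_norm_power2: "integrable M (\<lambda>\<omega>. (norm (n i \<omega>))\<^sup>2)"
  unfolding norm_power2_cart using integrable_coordinate_power[where k=2] by simp

lemma integrable_norm: "integrable M (\<lambda>\<omega>. norm (n i \<omega>))"
  by (rule square_integrable_imp_integrable[OF _ integrable_norm_power2]) simp

lemma integrable_weight_power2: "integrable M (\<lambda>\<omega>. (1 + (norm (n i \<omega>))\<^sup>2)\<^sup>2)"
proof -
  have fourth_moment: "integrable M (\<lambda>\<omega>. ((n i \<omega> $ j)\<^sup>2)\<^sup>2)" for j
    using integrable_coordinate_power[of i j 4] by (simp add: power_mult[symmetric])
  have "integrable M (\<lambda>\<omega>. (n i \<omega> $ j)\<^sup>2 * (n i \<omega> $ k)\<^sup>2)" for j k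
    by (rule integrable_mult_of_square_integrable[OF _ _ fourth_moment fourth_moment]; measurable)
  then have "integrable M (\<lambda>\<omega>. ((norm (n i \<omega>))\<^sup>2)\<^sup>2)"
    unfolding norm_power2_cart power2_eq_square[of "sum _ _"] sum_product by simp
  then show ?thesis
    using integrable_norm_power2 by (simp add: power2_sum)
qed

lemma expectation_vector: "expectation (n i) = 0"
  using integral_cart_component[of M "n i"] integrable_norm[of i]
  by (simp add: vec_eq_iff expectation_coordinate integrable_norm_iff)

lemma expectation_inner_scaleR: "expectation (\<lambda>\<omega>. (n i \<omega> \<bullet> c) *\<^sub>R n i \<omega>) = c"
proof -
  have integrable: "integrable M (\<lambda>\<omega>. (n i \<omega> \<bullet> c) *\<^sub>R n i \<omega>)"
  proof (rule Bochner_Integration.integrable_bound[of _ "\<lambda>\<omega>. norm c * (norm (n i \<omega>))\<^sup>2"])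
    have "norm ((v \<bullet> c) *\<^sub>R v) \<le> norm c * (norm v)\<^sup>2" for v :: "real ^ 'd"
      using mult_right_mono[OF Cauchy_Schwarz_ineq2[of v c], of "norm v"]
      by (simp add: power2_eq_square ac_simps)
    then show "AE \<omega> in M. norm ((n i \<omega> \<bullet> c) *\<^sub>R n i \<omega>) \<le> norm (norm c * (norm (n i \<omega>))\<^sup>2)"
      by (intro AE_I2) simp
  qed (simp_all add: integrable_norm_power2)
  have "expectation (\<lambda>\<omega>. (n i \<omega> \<bullet> c) *\<^sub>R n i \<omega>) $ j = c $ j" for j
  proof -
    have "((v \<bullet> c) *\<^sub>R v) $ j = (\<Sum>k\<in>UNIV. c $ k * (v $ k * v $ j))" for v :: "real ^ 'd"
      by (simp add: inner_vec_def sum_distrib_left ac_simps)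
    then have "expectation (\<lambda>\<omega>. (n i \<omega> \<bullet> c) *\<^sub>R n i \<omega>) $ j
        = (\<Sum>k\<in>UNIV. c $ k * expectation (\<lambda>\<omega>. n i \<omega> $ k * n i \<omega> $ j))"
      using integral_cart_component[OF integrable] by (simp add: integrable_coordinate_mult)
    then show ?thesis
      by (simp add: expectation_coordinate_mult if_distrib cong: if_cong)
  qed
  then show ?thesis by (simp add: vec_eq_iff)
qed

end

section \<open>Limits of the softmax averages\<close>

lemma AE_all_less:
  assumes "\<And>l. l < (L::nat) \<Longrightarrow> AE \<omega> in M. P l \<omega>"
  shows "AE \<omega> in M. \<forall>l<L. P l \<omega>"
proof -
  have "AE \<omega> in M. \<forall>l\<in>{..<L}. P l \<omega>"
    using assms by (intro AE_ball_countable') auto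
  then show ?thesis by (simp add: Ball_def)
qed

lemma integral_dominated_convergence_at:
  fixes s :: "'c::first_countable_topology \<Rightarrow> 'a \<Rightarrow> 'b::{banach, second_countable_topology}"
  assumes [measurable]: "\<And>t. s t \<in> borel_measurable M" "f \<in> borel_measurable M"
    and "integrable M w"
    and limit: "AE \<omega> in M. ((\<lambda>t. s t \<omega>) \<longlongrightarrow> f \<omega>) (at a)"
    and bound: "\<And>t \<omega>. \<omega> \<in> space M \<Longrightarrow> norm (s t \<omega>) \<le> w \<omega>"
  shows "((\<lambda>t. integral\<^sup>L M (s t)) \<longlongrightarrow> integral\<^sup>L M f) (at a)"
  unfolding tendsto_at_iff_sequentially comp_def
proof (intro allI impI)
  fix X :: "nat \<Rightarrow> 'c" assume "\<forall>k. X k \<in> UNIV - {a}" "X \<longlonglongrightarrow> a"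
  then have X: "filterlim X (at a) sequentially"
    by (intro filterlim_atI) auto
  show "(\<lambda>k. integral\<^sup>L M (s (X k))) \<longlonglongrightarrow> integral\<^sup>L M f"
  proof (rule integral_dominated_convergence[where w=w])
    show "AE \<omega> in M. (\<lambda>k. s (X k) \<omega>) \<longlonglongrightarrow> f \<omega>"
      using limit by eventually_elim (rule filterlim_compose[OF _ X])
  qed (simp_all add: assms)
qed

context std_normal_sequence
begin

lemma tendsto_expectation_softmax_weight:
  assumes "l < L"
  shows "((\<lambda>\<beta>. expectation (\<lambda>\<omega>. softmax_weight L x \<beta> (n i \<omega>) l)) \<longlongrightarrow> 1 / real L) (at 0)"
proof -
  have "((\<lambda>\<beta>. softmax_weight L x \<beta> v l) \<longlongrightarrow> softmax_weight L x 0 v l) (at 0)" for v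
    using DERIV_isCont[OF has_real_derivative_softmax_weight[of L x v l 0]] assms
    by (simp add: isCont_def)
  then have "((\<lambda>\<beta>. expectation (\<lambda>\<omega>. softmax_weight L x \<beta> (n i \<omega>) l))
      \<longlongrightarrow> expectation (\<lambda>\<omega>. 1 / real L)) (at 0)"
    using softmax_weight_0[of L x _ l] abs_softmax_weight_le_1[OF assms] assms
    by (intro integral_dominated_convergence_at[where w="\<lambda>_. 1"] AE_I2) auto
  then show ?thesis
    by (simp add: prob_space)
qed

lemma integrable_softmax_weight_scaleR:
  "l < L \<Longrightarrow> integrable M (\<lambda>\<omega>. softmax_weight L x \<beta> (n i \<omega>) l *\<^sub>R n i \<omega>)"
  by (intro Bochner_Integration.integrable_bound[OF integrable_norm[of i]] AE_I2)
     (auto intro!: mult_left_le_one_le simp: abs_softmax_weight_le_1)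

lemma expectation_difference_quotient_softmax_weight:
  assumes "l < L"
  shows "expectation (\<lambda>\<omega>. ((softmax_weight L x \<beta> (n i \<omega>) l - 1 / real L) / \<beta>) *\<^sub>R n i \<omega>)
    = (1 / \<beta>) *\<^sub>R expectation (\<lambda>\<omega>. softmax_weight L x \<beta> (n i \<omega>) l *\<^sub>R n i \<omega>)"
proof -
  have "integrable M (\<lambda>\<omega>. (1 / \<beta>) *\<^sub>R (softmax_weight L x \<beta> (n i \<omega>) l *\<^sub>R n i \<omega>))"
    by (rule integrable_scaleR_right[OF integrable_softmax_weight_scaleR[OF assms]])
  moreover have "integrable M (\<lambda>\<omega>. (1 / (\<beta> * real L)) *\<^sub>R n i \<omega>)"
    using integrable_norm[of i] by (intro integrable_scaleR_right) (simp add: integrable_norm_iff)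
  moreover have "(\<lambda>\<omega>. ((softmax_weight L x \<beta> (n i \<omega>) l - 1 / real L) / \<beta>) *\<^sub>R n i \<omega>)
      = (\<lambda>\<omega>. (1 / \<beta>) *\<^sub>R (softmax_weight L x \<beta> (n i \<omega>) l *\<^sub>R n i \<omega>) - (1 / (\<beta> * real L)) *\<^sub>R n i \<omega>)"
    by (auto simp: fun_eq_iff diff_divide_distrib scaleR_diff_left)
  ultimately show ?thesis
    by (simp only: Bochner_Integration.integral_diff integral_scaleR_right expectation_vector) simp
qed

lemma tendsto_scaled_expectation_softmax_weight:
  assumes l: "l < L"
  shows "((\<lambda>\<beta>. (1 / \<beta>) *\<^sub>R expectation (\<lambda>\<omega>. softmax_weight L x \<beta> (n i \<omega>) l *\<^sub>R n i \<omega>))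
    \<longlongrightarrow> (1 / real L) *\<^sub>R (x l - (1 / real L) *\<^sub>R (\<Sum>r<L. x r))) (at 0)"
proof -
  define c where "c = x l - (1 / real L) *\<^sub>R (\<Sum>r<L. x r)"
  define s where "s \<beta> \<omega> = ((softmax_weight L x \<beta> (n i \<omega>) l - 1 / real L) / \<beta>) *\<^sub>R n i \<omega>" for \<beta> \<omega>
  have L: "0 < L" using l by simp
  define R where "R = (\<Sum>r<L. norm (x r))"
  have R: "\<And>r. r < L \<Longrightarrow> norm (x r) \<le> R" and R0: "0 \<le> R"
    unfolding R_def by (auto intro: member_le_sum sum_nonneg)
  have [measurable]: "s \<beta> \<in> borel_measurable M" for \<beta>
    unfolding s_def by measurable
  have quotient_bound: "\<bar>(softmax_weight L x \<beta> v l - 1 / real L) / \<beta>\<bar> \<le> 2 * R * norm v" for \<beta> v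
  proof (cases "\<beta> = 0")
    case False
    then show ?thesis
      using softmax_weight_lipschitz[OF l R, where \<gamma>=\<beta> and \<beta>=0 and v=v]
      by (simp add: softmax_weight_0[OF L] abs_div divide_le_eq)
  qed (simp add: R0)
  have "((\<lambda>\<beta>. expectation (s \<beta>)) \<longlongrightarrow> expectation (\<lambda>\<omega>. ((1 / real L) * (n i \<omega> \<bullet> c)) *\<^sub>R n i \<omega>)) (at 0)"
  proof (rule integral_dominated_convergence_at[where w="\<lambda>\<omega>. 2 * R * (norm (n i \<omega>))\<^sup>2"])
    show "AE \<omega> in M. ((\<lambda>\<beta>. s \<beta> \<omega>) \<longlongrightarrow> ((1 / real L) * (n i \<omega> \<bullet> c)) *\<^sub>R n i \<omega>) (at 0)"
      unfolding s_def c_def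
      by (intro AE_I2 tendsto_scaleR softmax_weight_difference_quotient_at_0[OF l] tendsto_const)
    show "norm (s \<beta> \<omega>) \<le> 2 * R * (norm (n i \<omega>))\<^sup>2" for \<beta> \<omega>
      unfolding s_def using mult_right_mono[OF quotient_bound norm_ge_zero]
      by (simp add: power2_eq_square mult.assoc)
  qed (measurable, simp add: integrable_norm_power2)
  also have "expectation (\<lambda>\<omega>. ((1 / real L) * (n i \<omega> \<bullet> c)) *\<^sub>R n i \<omega>) = (1 / real L) *\<^sub>R c"
  proof -
    have "(\<lambda>\<omega>. ((1 / real L) * (n i \<omega> \<bullet> c)) *\<^sub>R n i \<omega>) = (\<lambda>\<omega>. (1 / real L) *\<^sub>R ((n i \<omega> \<bullet> c) *\<^sub>R n i \<omega>))"
      by simp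
    then show ?thesis
      by (simp only: integral_scaleR_right expectation_inner_scaleR)
  qed
  finally have "((\<lambda>\<beta>. expectation (s \<beta>)) \<longlongrightarrow> (1 / real L) *\<^sub>R c) (at 0)" .
  moreover have "expectation (s \<beta>) = (1 / \<beta>) *\<^sub>R expectation (\<lambda>\<omega>. softmax_weight L x \<beta> (n i \<omega>) l *\<^sub>R n i \<omega>)"
    for \<beta>
    unfolding s_def by (rule expectation_difference_quotient_softmax_weight[OF l])
  ultimately show ?thesis
    unfolding c_def by simp
qed

lemma AE_tendsto_average_softmax_weight:
  assumes l: "l < L"
  shows "AE \<omega> in M. \<forall>\<beta>. (\<lambda>m. (1 / real m) * (\<Sum>i<m. softmax_weight L x \<beta> (n i \<omega>) l))
    \<longlonglongrightarrow> expectation (\<lambda>\<omega>. softmax_weight L x \<beta> (n 0 \<omega>) l)"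
proof -
  define R where "R = (\<Sum>r<L. norm (x r))"
  have R: "\<And>r. r < L \<Longrightarrow> norm (x r) \<le> R" and R0: "0 \<le> R"
    unfolding R_def by (auto intro: member_le_sum sum_nonneg)
  have lipschitz: "\<bar>softmax_weight L x \<gamma> v l - softmax_weight L x \<beta> v l\<bar> \<le> 2 * R * norm v * \<bar>\<gamma> - \<beta>\<bar>"
    for \<gamma> \<beta> v
    by (rule softmax_weight_lipschitz[OF l R])
  have "AE \<omega> in M. \<forall>\<beta>\<in>UNIV. (\<lambda>m. (1 / real m) *\<^sub>R (\<Sum>i<m. softmax_weight L x \<beta> (n i \<omega>) l))
      \<longlonglongrightarrow> expectation (\<lambda>\<omega>. softmax_weight L x \<beta> (n 0 \<omega>) l)"
  proof (rule AE_strong_law_uniform[where h="\<lambda>v. 1 + (norm v)\<^sup>2" and \<delta>="\<lambda>_. 1" and C="\<lambda>_. 2 * R"])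
    show "integrable M (\<lambda>\<omega>. (norm (softmax_weight L x \<beta> (n 0 \<omega>) l))\<^sup>2)" for \<beta>
      using abs_softmax_weight_le_1[OF l]
      by (intro integrable_const_bound[where B=1] AE_I2) (auto simp: abs_square_le_1)
    show "norm (softmax_weight L x \<gamma> v l - softmax_weight L x \<beta> v l) \<le> 2 * R * \<bar>\<gamma> - \<beta>\<bar> * (1 + (norm v)\<^sup>2)"
      for \<beta> \<gamma> v
    proof -
      have "(2 * R * \<bar>\<gamma> - \<beta>\<bar>) * norm v \<le> (2 * R * \<bar>\<gamma> - \<beta>\<bar>) * (1 + (norm v)\<^sup>2)"
        using R0 by (intro mult_left_mono le_1_plus_power2) auto
      then have "2 * R * norm v * \<bar>\<gamma> - \<beta>\<bar> \<le> 2 * R * \<bar>\<gamma> - \<beta>\<bar> * (1 + (norm v)\<^sup>2)"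
        by (simp add: ac_simps)
      then show ?thesis
        unfolding real_norm_def by (rule order.trans[OF lipschitz])
    qed
  qed (simp_all add: integrable_weight_power2 R0)
  then show ?thesis by simp
qed

lemma AE_tendsto_average_scaled_softmax_weight:
  assumes l: "l < L"
  shows "AE \<omega> in M. \<forall>\<beta>. \<beta> \<noteq> 0 \<longrightarrow>
    (\<lambda>m. (1 / real m) *\<^sub>R (\<Sum>i<m. (softmax_weight L x \<beta> (n i \<omega>) l / \<beta>) *\<^sub>R n i \<omega>))
      \<longlonglongrightarrow> (1 / \<beta>) *\<^sub>R expectation (\<lambda>\<omega>. softmax_weight L x \<beta> (n 0 \<omega>) l *\<^sub>R n 0 \<omega>)"
proof -
  define R where "R = (\<Sum>r<L. norm (x r))"
  have R: "\<And>r. r < L \<Longrightarrow> norm (x r) \<le> R" and R0: "0 \<le> R"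
    unfolding R_def by (auto intro: member_le_sum sum_nonneg)
  have "AE \<omega> in M. \<forall>\<beta>\<in>-{0}.
      (\<lambda>m. (1 / real m) *\<^sub>R (\<Sum>i<m. (softmax_weight L x \<beta> (n i \<omega>) l / \<beta>) *\<^sub>R n i \<omega>))
      \<longlonglongrightarrow> expectation (\<lambda>\<omega>. (softmax_weight L x \<beta> (n 0 \<omega>) l / \<beta>) *\<^sub>R n 0 \<omega>)"
  proof (rule AE_strong_law_uniform[where h="\<lambda>v. 1 + (norm v)\<^sup>2" and \<delta>="\<lambda>\<beta>. \<bar>\<beta>\<bar> / 2"
        and C="\<lambda>\<beta>. 2 * R / \<bar>\<beta>\<bar> + 2 / \<beta>\<^sup>2"])
    show "integrable M (\<lambda>\<omega>. (norm ((softmax_weight L x \<beta> (n 0 \<omega>) l / \<beta>) *\<^sub>R n 0 \<omega>))\<^sup>2)" for \<beta>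
    proof (rule Bochner_Integration.integrable_bound[of _ "\<lambda>\<omega>. (1 / \<beta>)\<^sup>2 * (norm (n 0 \<omega>))\<^sup>2"])
      have "(softmax_weight L x \<beta> v l / \<beta>)\<^sup>2 \<le> (1 / \<beta>)\<^sup>2" for v
        using abs_softmax_weight_le_1[OF l, of x \<beta> v]
        by (simp add: power_divide divide_right_mono abs_square_le_1)
      then have "(norm ((softmax_weight L x \<beta> v l / \<beta>) *\<^sub>R v))\<^sup>2 \<le> (1 / \<beta>)\<^sup>2 * (norm v)\<^sup>2" for v
        unfolding norm_scaleR power_mult_distrib power2_abs by (rule mult_right_mono) simp
      then show "AE \<omega> in M. norm ((norm ((softmax_weight L x \<beta> (n 0 \<omega>) l / \<beta>) *\<^sub>R n 0 \<omega>))\<^sup>2)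
          \<le> norm ((1 / \<beta>)\<^sup>2 * (norm (n 0 \<omega>))\<^sup>2)"
        by (intro AE_I2) simp
    qed (simp_all add: integrable_norm_power2)
  qed (use R0 scaled_softmax_weight_lipschitz[OF l R] in \<open>simp_all add: integrable_weight_power2\<close>)
  moreover have "expectation (\<lambda>\<omega>. (softmax_weight L x \<beta> (n 0 \<omega>) l / \<beta>) *\<^sub>R n 0 \<omega>)
      = (1 / \<beta>) *\<^sub>R expectation (\<lambda>\<omega>. softmax_weight L x \<beta> (n 0 \<omega>) l *\<^sub>R n 0 \<omega>)" for \<beta>
    by (simp flip: integral_scaleR_right)
  ultimately show ?thesis by (simp add: Ball_def)
qed

lemma AE_limits_of_softmax_averages:
  assumes l: "l < L"
  shows "AE \<omega> in M.
    (\<exists>A :: real \<Rightarrow> real.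
      (\<forall>\<beta>. \<beta> \<noteq> 0 \<longrightarrow> (\<lambda>m. (1 / real m) * (\<Sum>i<m. softmax_weight L x \<beta> (n i \<omega>) l)) \<longlonglongrightarrow> A \<beta>)
      \<and> (A \<longlongrightarrow> 1 / real L) (at 0))
    \<and> (\<exists>B :: real \<Rightarrow> real ^ 'd.
      (\<forall>\<beta>. \<beta> \<noteq> 0 \<longrightarrow>
        (\<lambda>m. (1 / real m) *\<^sub>R (\<Sum>i<m. (softmax_weight L x \<beta> (n i \<omega>) l / \<beta>) *\<^sub>R n i \<omega>)) \<longlonglongrightarrow> B \<beta>)
      \<and> (B \<longlongrightarrow> (1 / real L) *\<^sub>R (x l - (1 / real L) *\<^sub>R (\<Sum>r<L. x r))) (at 0))"
  using AE_tendsto_average_softmax_weight[where x=x, OF l]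
    AE_tendsto_average_scaled_softmax_weight[where x=x, OF l]
proof eventually_elim
  case (elim \<omega>)
  show ?case
  proof (intro conjI exI)
    show "\<forall>\<beta>. \<beta> \<noteq> 0 \<longrightarrow> (\<lambda>m. (1 / real m) * (\<Sum>i<m. softmax_weight L x \<beta> (n i \<omega>) l))
        \<longlonglongrightarrow> expectation (\<lambda>\<omega>. softmax_weight L x \<beta> (n 0 \<omega>) l)"
      using elim(1) by simp
    show "\<forall>\<beta>. \<beta> \<noteq> 0 \<longrightarrow> (\<lambda>m. (1 / real m) *\<^sub>R (\<Sum>i<m. (softmax_weight L x \<beta> (n i \<omega>) l / \<beta>) *\<^sub>R n i \<omega>))
        \<longlonglongrightarrow> (1 / \<beta>) *\<^sub>R expectation (\<lambda>\<omega>. softmax_weight L x \<beta> (n 0 \<omega>) l *\<^sub>R n 0 \<omega>)"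
      using elim(2) .
  qed (rule tendsto_expectation_softmax_weight[OF l], rule tendsto_scaled_expectation_softmax_weight[OF l])
qed

end

theorem lemma6:
  fixes M :: "'w measure"
    and n :: "nat \<Rightarrow> 'w \<Rightarrow> real ^ 'd"
    and x :: "nat \<Rightarrow> real ^ 'd"
    and L :: nat
  assumes "prob_space M"
    and "L \<ge> 2"
    and "\<forall>i<L. \<forall>j<L. i \<noteq> j \<longrightarrow> x i \<noteq> x j"
    and "\<forall>i<L. \<forall>j<L. norm (x i) = norm (x j)"
    and "\<forall>i. n i \<in> borel_measurable M"
    and "prob_space.indep_vars M (\<lambda>_. borel) (\<lambda>(i, j). \<lambda>\<omega>. n i \<omega> $ j) (UNIV :: (nat \<times> 'd) set)"
    and "\<forall>i j. distributed M lborel (\<lambda>\<omega>. n i \<omega> $ j) (\<lambda>t. ennreal (std_normal_density t))"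
  shows
    "(AE \<omega> in M. \<forall>l<L.
        (\<exists>A :: real \<Rightarrow> real.
           (\<forall>\<beta>. \<beta> \<noteq> 0 \<longrightarrow>
              (\<lambda>m. (1 / real m) * (\<Sum>i<m. softmax_weight L x \<beta> (n i \<omega>) l)) \<longlonglongrightarrow> A \<beta>)
           \<and> (A \<longlongrightarrow> 1 / real L) (at 0))
      \<and> (\<exists>B :: real \<Rightarrow> real ^ 'd.
           (\<forall>\<beta>. \<beta> \<noteq> 0 \<longrightarrow>
              (\<lambda>m. (1 / real m) *\<^sub>R (\<Sum>i<m. (softmax_weight L x \<beta> (n i \<omega>) l / \<beta>) *\<^sub>R n i \<omega>))
                \<longlonglongrightarrow> B \<beta>)
           \<and> (B \<longlongrightarrow> (1 / real L) *\<^sub>R ((1 - 1 / real L) *\<^sub>R x l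
                                     - (1 / real L) *\<^sub>R (\<Sum>r\<in>{..<L} - {l}. x r))) (at 0)))
     \<and> (\<forall>i. \<forall>l<L.
          ((\<lambda>\<beta>. integral\<^sup>L M (\<lambda>\<omega>. softmax_weight L x \<beta> (n i \<omega>) l)) \<longlongrightarrow> 1 / real L) (at 0)
        \<and> ((\<lambda>\<beta>. (1 / \<beta>) *\<^sub>R integral\<^sup>L M (\<lambda>\<omega>. softmax_weight L x \<beta> (n i \<omega>) l *\<^sub>R n i \<omega>))
             \<longlongrightarrow> (1 / real L) *\<^sub>R ((1 - 1 / real L) *\<^sub>R x l
                                     - (1 / real L) *\<^sub>R (\<Sum>r\<in>{..<L} - {l}. x r))) (at 0))"
proof -
  interpret std_normal_sequence M n
    using assms(1,5-7) by (simp add: std_normal_sequence_def std_normal_sequence_axioms_def)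
  have centered: "(1 - 1 / real L) *\<^sub>R x l - (1 / real L) *\<^sub>R (\<Sum>r\<in>{..<L} - {l}. x r)
      = x l - (1 / real L) *\<^sub>R (\<Sum>r<L. x r)" if "l < L" for l
    using that by (simp add: sum.remove algebra_simps)
  show ?thesis
    using AE_all_less[OF AE_limits_of_softmax_averages]
      tendsto_expectation_softmax_weight tendsto_scaled_expectation_softmax_weight
    by (simp add: centered cong: imp_cong)
qed

end
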